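(* Let $A$ be a finite alphabet. If $X\subseteq A^*$ is a regular language, then $W(X)$ is a regular language over $\{0,\dots,|A|-1\}$. In particular, if $X\subseteq A^{\mathbb{N}}$ is a (one-sided) sofic shift, then $W(X)$ is a sofic shift.
   Context: Winning set: for $n\in\mathbb{N}\cup\{\mathbb{N}\}$ and $X\subseteq A^n$, a choice sequence $\alpha=\alpha_0\alpha_1\cdots$ of length $n$ over $\{0,\dots,|A|-1\}$ determines a game: in round $j$ Alice chooses $A_j\subseteq A$ with $|A_j|=\alpha_j+1$, then Bob chooses $a_j\in A_j$; Alice wins if the produced word $a_0a_1\cdots$ lies in $X$. $W(X)$ is the set of choice sequences for which Alice has a winning strategy. For a set $X$ of words of various lengths, $W(X)=\bigcup_{n\in\mathbb{N}\cup\{\mathbb{N}\}}W(X\cap A^n)$. A one-sided sofic shift is the set of labels of right-infinite paths in a finite edge-labeled graph. *)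

theory Defs
  imports Main
begin

definition regular_over :: "'b set \<Rightarrow> 'b list set \<Rightarrow> bool" where
  "regular_over Sig L \<longleftrightarrow> L \<subseteq> lists Sig \<and>
     (\<exists>(Q::nat set) q0 (delta :: nat \<Rightarrow> 'b \<Rightarrow> nat) F.
        finite Q \<and> q0 \<in> Q \<and> (\<forall>q\<in>Q. \<forall>a\<in>Sig. delta q a \<in> Q) \<and> F \<subseteq> Q \<and>
        (\<forall>w\<in>lists Sig. w \<in> L \<longleftrightarrow> foldl delta q0 w \<in> F))"

definition sofic_over :: "'b set \<Rightarrow> (nat \<Rightarrow> 'b) set \<Rightarrow> bool" where
  "sofic_over Sig X \<longleftrightarrow>
     (\<exists>(V::nat set) (E :: (nat \<times> 'b \<times> nat) set).
        finite V \<and> finite E \<and> E \<subseteq> V \<times> Sig \<times> V \<and>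
        X = {x. \<exists>p::nat \<Rightarrow> nat. \<forall>i. (p i, x i, p (Suc i)) \<in> E})"

text \<open>Winning set for a set of finite words (union over all finite lengths n).
  A strategy of Alice maps the word produced so far to her chosen subset.\<close>
definition W_fin :: "('a::finite) list set \<Rightarrow> nat list set" where
  "W_fin X = {alpha. (\<forall>j<length alpha. alpha ! j < card (UNIV::'a set)) \<and>
     (\<exists>sigma :: 'a list \<Rightarrow> 'a set.
        (\<forall>u. length u < length alpha \<longrightarrow> card (sigma u) = alpha ! length u + 1) \<and>
        (\<forall>w. length w = length alpha \<and> (\<forall>i<length alpha. w ! i \<in> sigma (take i w))
              \<longrightarrow> w \<in> X))}"

definition W_inf :: "(nat \<Rightarrow> ('a::finite)) set \<Rightarrow> (nat \<Rightarrow> nat) set" where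
  "W_inf X = {alpha. (\<forall>j. alpha j < card (UNIV::'a set)) \<and>
     (\<exists>sigma :: 'a list \<Rightarrow> 'a set.
        (\<forall>u. card (sigma u) = alpha (length u) + 1) \<and>
        (\<forall>w. (\<forall>i. w i \<in> sigma (map w [0..<i])) \<longrightarrow> w \<in> X))}"

end

theory Submission
  imports Defs "HOL-Library.Countable_Set"
begin

text \<open>Take a DFA for \<open>X\<close> with states \<open>Q\<close>. Alice wins the game for \<open>k # beta\<close> from state \<open>q\<close>
  iff at least \<open>k+1\<close> letters lead to states from which she wins the game for \<open>beta\<close>. So her
  winning region for \<open>alpha\<close> is obtained from the final states by iterating the controllable
  predecessor operators \<open>cpre\<close> along \<open>alpha\<close> from right to left; these are maps on the finite
  set \<open>Pow Q\<close>, so a DFA on \<open>Pow (Pow Q)\<close> can track them from left to right.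

  For a sofic shift Alice cannot observe the vertex of the graph, only the set of vertices a
  path with the labels played so far may have reached. A winning strategy yields a sequence of
  nonempty families of such sets, each contained in the controllable predecessor of the next one
  with respect to the subset construction; these sequences are the labels of paths in a finite graph on \<open>Pow (Pow V)\<close>.
  Conversely such a sequence gives a strategy for which every play has arbitrarily long
  labelled paths, hence by Koenig's lemma an infinite one.\<close>

lemma regular_overI:
  fixes Q :: "'s set" and delta :: "'s \<Rightarrow> 'b \<Rightarrow> 's"
  assumes L: "L \<subseteq> lists Sig" and finite_Q: "finite Q" and qs: "qs \<in> Q"
    and closed: "\<forall>q\<in>Q. \<forall>a\<in>Sig. delta q a \<in> Q" and FQ: "F \<subseteq> Q"
    and accepts: "\<forall>w\<in>lists Sig. w \<in> L \<longleftrightarrow> foldl delta qs w \<in> F"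
  shows "regular_over Sig L"
proof -
  have countable_Q: "countable Q" using finite_Q by (rule countable_finite)
  define enc where "enc = to_nat_on Q"
  define dec where "dec = from_nat_into Q"
  have dec_enc: "\<And>q. q \<in> Q \<Longrightarrow> dec (enc q) = q" unfolding enc_def dec_def using countable_Q by simp
  have inj_enc: "inj_on enc Q" unfolding enc_def using countable_Q by blast
  define delta' where "delta' m a = enc (delta (dec m) a)" for m a
  have foldl_enc: "\<And>q. q \<in> Q \<Longrightarrow> foldl delta' (enc q) w = enc (foldl delta q w) \<and> foldl delta q w \<in> Q"
    if "w \<in> lists Sig" for w
    using that
  proof (induction w)
    case Nil then show ?case by simp
  next
    case (Cons a w)
    then have "delta q a \<in> Q" using closed by auto
    moreover have "delta' (enc q) a = enc (delta q a)" unfolding delta'_def using dec_enc Cons by simp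
    ultimately show ?case using Cons by simp
  qed
  show ?thesis unfolding regular_over_def
  proof (rule conjI, fact L, rule exI[of _ "enc ` Q"], rule exI[of _ "enc qs"], rule exI[of _ delta'],
      rule exI[of _ "enc ` F"], intro conjI)
    show "finite (enc ` Q)" using finite_Q by simp
    show "enc qs \<in> enc ` Q" using qs by simp
    show "\<forall>q\<in>enc ` Q. \<forall>a\<in>Sig. delta' q a \<in> enc ` Q"
      unfolding delta'_def using dec_enc closed by auto
    show "enc ` F \<subseteq> enc ` Q" using FQ by auto
    show "\<forall>w\<in>lists Sig. (w \<in> L) = (foldl delta' (enc qs) w \<in> enc ` F)"
    proof
      fix w assume w: "w \<in> lists Sig"
      from foldl_enc[OF w qs] have e: "foldl delta' (enc qs) w = enc (foldl delta qs w)"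
        and m: "foldl delta qs w \<in> Q" by auto
      have "(enc (foldl delta qs w) \<in> enc ` F) = (foldl delta qs w \<in> F)"
        using inj_on_image_mem_iff[OF inj_enc m FQ] .
      then show "(w \<in> L) = (foldl delta' (enc qs) w \<in> enc ` F)" using accepts w e by simp
    qed
  qed
qed

lemma sofic_overI:
  fixes V :: "'s set" and E :: "('s \<times> 'b \<times> 's) set"
  assumes finite_V: "finite V" and finite_E: "finite E" and EV: "E \<subseteq> V \<times> Sig \<times> V"
    and X: "X = {x. \<exists>p. \<forall>i. (p i, x i, p (Suc i)) \<in> E}"
  shows "sofic_over Sig X"
proof -
  have countable_V: "countable V" using finite_V by (rule countable_finite)
  define enc where "enc = to_nat_on V"
  define dec where "dec = from_nat_into V"
  have dec_enc: "\<And>q. q \<in> V \<Longrightarrow> dec (enc q) = q" unfolding enc_def dec_def using countable_V by simp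
  define E' where "E' = (\<lambda>(v,a,v'). (enc v, a, enc v')) ` E"
  show ?thesis unfolding sofic_over_def
  proof (intro exI[of _ "enc ` V"] exI[of _ E'] conjI)
    show "finite (enc ` V)" using finite_V by simp
    show "finite E'" unfolding E'_def using finite_E by simp
    show "E' \<subseteq> enc ` V \<times> Sig \<times> enc ` V" unfolding E'_def using EV by auto
    show "X = {x. \<exists>p. \<forall>i. (p i, x i, p (Suc i)) \<in> E'}"
    proof (rule set_eqI, rule iffI)
      fix x assume "x \<in> X"
      then obtain p where p: "\<forall>i. (p i, x i, p (Suc i)) \<in> E" using X by auto
      have "\<forall>i. ((enc \<circ> p) i, x i, (enc \<circ> p) (Suc i)) \<in> E'"
        unfolding E'_def using p by force
      then show "x \<in> {x. \<exists>p. \<forall>i. (p i, x i, p (Suc i)) \<in> E'}" by blast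
    next
      fix x assume "x \<in> {x. \<exists>p. \<forall>i. (p i, x i, p (Suc i)) \<in> E'}"
      then obtain p where p: "\<forall>i. (p i, x i, p (Suc i)) \<in> E'" by auto
      have "\<forall>i. ((dec \<circ> p) i, x i, (dec \<circ> p) (Suc i)) \<in> E"
      proof
        fix i
        from p obtain v a v' where "(v,a,v') \<in> E" "p i = enc v" "x i = a" "p (Suc i) = enc v'"
          unfolding E'_def by fastforce
        moreover have "v \<in> V" "v' \<in> V" using EV calculation(1) by auto
        ultimately show "((dec \<circ> p) i, x i, (dec \<circ> p) (Suc i)) \<in> E" using dec_enc by simp
      qed
      then show "x \<in> X" using X by blast
    qed
  qed
qed

definition follows :: "('a list \<Rightarrow> 'a set) \<Rightarrow> 'a list \<Rightarrow> bool" where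
  "follows sigma u \<longleftrightarrow> (\<forall>i<length u. u ! i \<in> sigma (take i u))"

lemma follows_snoc: "follows sigma (u @ [a]) \<longleftrightarrow> follows sigma u \<and> a \<in> sigma u"
  unfolding follows_def by (auto simp: nth_append less_Suc_eq)

lemma follows_Cons: "follows sigma (a # w) \<longleftrightarrow> a \<in> sigma [] \<and> follows (\<lambda>u. sigma (a # u)) w"
  unfolding follows_def by (auto simp: less_Suc_eq_0_disj)

definition wins_from :: "('q \<Rightarrow> 'a \<Rightarrow> 'q) \<Rightarrow> 'q set \<Rightarrow> 'q \<Rightarrow> nat list \<Rightarrow> bool" where
  "wins_from delta F q alpha \<longleftrightarrow> (\<exists>sigma :: 'a list \<Rightarrow> 'a set.
     (\<forall>u. length u < length alpha \<longrightarrow> card (sigma u) = alpha ! length u + 1) \<and>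
     (\<forall>w. length w = length alpha \<and> follows sigma w \<longrightarrow> foldl delta q w \<in> F))"

definition cpre :: "'q set \<Rightarrow> ('q \<Rightarrow> 'a \<Rightarrow> 'q) \<Rightarrow> nat \<Rightarrow> 'q set \<Rightarrow> 'q set" where
  "cpre Q delta k S = {q\<in>Q. Suc k \<le> card {a. delta q a \<in> S}}"

lemma mem_cpre_iff: "q \<in> cpre Q delta k S \<longleftrightarrow> q \<in> Q \<and> Suc k \<le> card {a. delta q a \<in> S}"
  unfolding cpre_def by simp

lemma wins_from_Nil [simp]: "wins_from delta F q [] \<longleftrightarrow> q \<in> F"
  unfolding wins_from_def follows_def by simp

lemma wins_from_Cons_card:
  fixes delta :: "'q \<Rightarrow> ('a::finite) \<Rightarrow> 'q"
  assumes "wins_from delta F q (k # beta)"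
  shows "Suc k \<le> card {a. wins_from delta F (delta q a) beta}"
proof -
  obtain sigma :: "'a list \<Rightarrow> 'a set" where
    card_sigma: "\<forall>u. length u < Suc (length beta) \<longrightarrow> card (sigma u) = (k # beta) ! length u + 1" and
    win: "\<forall>w. length w = Suc (length beta) \<and> follows sigma w \<longrightarrow> foldl delta q w \<in> F"
    using assms unfolding wins_from_def by auto
  have "sigma [] \<subseteq> {a. wins_from delta F (delta q a) beta}"
  proof
    fix a assume a: "a \<in> sigma []"
    have "wins_from delta F (delta q a) beta"
      unfolding wins_from_def
    proof (intro exI[of _ "\<lambda>u. sigma (a # u)"] conjI allI impI)
      fix u :: "'a list" assume "length u < length beta"
      then show "card (sigma (a # u)) = beta ! length u + 1"
        using card_sigma[rule_format, of "a # u"] by simp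
    next
      fix w :: "'a list" assume "length w = length beta \<and> follows (\<lambda>u. sigma (a # u)) w"
      then show "foldl delta (delta q a) w \<in> F"
        using win[rule_format, of "a # w"] a by (simp add: follows_Cons)
    qed
    then show "a \<in> {a. wins_from delta F (delta q a) beta}" by simp
  qed
  then have "card (sigma []) \<le> card {a. wins_from delta F (delta q a) beta}"
    by (simp add: card_mono)
  then show ?thesis using card_sigma[rule_format, of "[]"] by simp
qed

lemma wins_from_ConsI:
  fixes delta :: "'q \<Rightarrow> ('a::finite) \<Rightarrow> 'q"
  assumes "Suc k \<le> card {a. wins_from delta F (delta q a) beta}"
  shows "wins_from delta F q (k # beta)"
proof -
  obtain B where B: "B \<subseteq> {a. wins_from delta F (delta q a) beta}" "card B = Suc k"
    using assms by (meson obtain_subset_with_card_n)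
  then obtain b0 where b0: "b0 \<in> B" by fastforce
  have "\<forall>a\<in>B. \<exists>sg :: 'a list \<Rightarrow> 'a set.
      (\<forall>u. length u < length beta \<longrightarrow> card (sg u) = beta ! length u + 1) \<and>
      (\<forall>w. length w = length beta \<and> follows sg w \<longrightarrow> foldl delta (delta q a) w \<in> F)"
    using B(1) unfolding wins_from_def by blast
  then obtain sg :: "'a \<Rightarrow> 'a list \<Rightarrow> 'a set" where sg: "\<forall>a\<in>B.
      (\<forall>u. length u < length beta \<longrightarrow> card (sg a u) = beta ! length u + 1) \<and>
      (\<forall>w. length w = length beta \<and> follows (sg a) w \<longrightarrow> foldl delta (delta q a) w \<in> F)"
    by metis
  define sigma where
    "sigma u = (case u of [] \<Rightarrow> B | a # u' \<Rightarrow> sg (if a \<in> B then a else b0) u')" for u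
  show ?thesis
    unfolding wins_from_def
  proof (intro exI[of _ sigma] conjI allI impI)
    fix u :: "'a list" assume "length u < length (k # beta)"
    then show "card (sigma u) = (k # beta) ! length u + 1"
      using B(2) sg b0 by (cases u) (auto simp: sigma_def)
  next
    fix w :: "'a list" assume w: "length w = length (k # beta) \<and> follows sigma w"
    then obtain a w' where aw: "w = a # w'" by (cases w) auto
    have "a \<in> B" using w unfolding aw follows_Cons by (simp add: sigma_def)
    moreover have "follows (sg a) w'" using w \<open>a \<in> B\<close> unfolding aw follows_Cons by (simp add: sigma_def)
    ultimately show "foldl delta q w \<in> F" using sg w by (simp add: aw)
  qed
qed

lemma wins_from_Cons_iff:
  fixes delta :: "'q \<Rightarrow> ('a::finite) \<Rightarrow> 'q"
  shows "wins_from delta F q (k # beta) \<longleftrightarrow> Suc k \<le> card {a. wins_from delta F (delta q a) beta}"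
  using wins_from_Cons_card[of delta F q k beta] wins_from_ConsI[of k delta F q beta] by blast

lemma wins_from_iff_foldr_cpre:
  fixes delta :: "'q \<Rightarrow> ('a::finite) \<Rightarrow> 'q"
  assumes closed: "\<forall>q\<in>Q. \<forall>a. delta q a \<in> Q" and "F \<subseteq> Q" and "q \<in> Q"
  shows "wins_from delta F q alpha \<longleftrightarrow> q \<in> foldr (cpre Q delta) alpha F"
  using \<open>q \<in> Q\<close>
proof (induction alpha arbitrary: q)
  case Nil
  then show ?case by simp
next
  case (Cons k beta)
  then have "{a. wins_from delta F (delta q a) beta} = {a. delta q a \<in> foldr (cpre Q delta) beta F}"
    using closed by auto
  then show ?case using Cons.prems by (simp add: wins_from_Cons_iff mem_cpre_iff)
qed

lemma regular_W_fin:
  fixes X :: "('a::finite) list set"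
  assumes "regular_over UNIV X"
  shows "regular_over {..<card (UNIV::'a set)} (W_fin X)"
proof -
  obtain Q q0 and delta :: "nat \<Rightarrow> 'a \<Rightarrow> nat" and F where
    "finite Q" and "q0 \<in> Q" and closed: "\<forall>q\<in>Q. \<forall>a. delta q a \<in> Q" and "F \<subseteq> Q"
    and X: "\<forall>w. w \<in> X \<longleftrightarrow> foldl delta q0 w \<in> F"
    using assms unfolding regular_over_def by auto
  define step where "step Fs k = {S \<in> Pow Q. cpre Q delta k S \<in> Fs}" for Fs k
  define init where "init = {S \<in> Pow Q. q0 \<in> S}"
  have foldl_step: "foldl step init alpha = {S \<in> Pow Q. q0 \<in> foldr (cpre Q delta) alpha S}" for alpha
  proof (induction alpha rule: rev_induct)
    case Nil
    then show ?case by (simp add: init_def)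
  next
    case (snoc k alpha)
    have "cpre Q delta k S \<subseteq> Q" for S by (auto simp: cpre_def)
    then show ?case using snoc by (auto simp: step_def)
  qed
  have W_fin_eq: "W_fin X = {alpha. (\<forall>j<length alpha. alpha ! j < card (UNIV::'a set)) \<and>
      wins_from delta F q0 alpha}"
    unfolding W_fin_def wins_from_def follows_def using X by auto
  show ?thesis
  proof (rule regular_overI[where Q = "Pow (Pow Q)" and qs = init and delta = step
        and F = "{Fs \<in> Pow (Pow Q). F \<in> Fs}"])
    show "W_fin X \<subseteq> lists {..<card (UNIV::'a set)}"
      unfolding W_fin_def by (auto simp: in_set_conv_nth)
    show "finite (Pow (Pow Q))" using \<open>finite Q\<close> by simp
    show "init \<in> Pow (Pow Q)" unfolding init_def by auto
    show "\<forall>Fs\<in>Pow (Pow Q). \<forall>k\<in>{..<card (UNIV::'a set)}. step Fs k \<in> Pow (Pow Q)"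
      unfolding step_def by auto
    show "{Fs \<in> Pow (Pow Q). F \<in> Fs} \<subseteq> Pow (Pow Q)" by auto
    show "\<forall>w\<in>lists {..<card (UNIV::'a set)}. w \<in> W_fin X \<longleftrightarrow> foldl step init w \<in> {Fs \<in> Pow (Pow Q). F \<in> Fs}"
    proof
      fix w assume "w \<in> lists {..<card (UNIV::'a set)}"
      then have "\<forall>j<length w. w ! j < card (UNIV::'a set)" by (auto simp: nth_mem)
      then have "w \<in> W_fin X \<longleftrightarrow> q0 \<in> foldr (cpre Q delta) w F"
        using W_fin_eq wins_from_iff_foldr_cpre[OF closed \<open>F \<subseteq> Q\<close> \<open>q0 \<in> Q\<close>] by simp
      then show "w \<in> W_fin X \<longleftrightarrow> foldl step init w \<in> {Fs \<in> Pow (Pow Q). F \<in> Fs}"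
        using foldl_step \<open>F \<subseteq> Q\<close> by auto
    qed
  qed
qed

lemma follows_prefix:
  assumes "\<forall>i. w i \<in> sigma (map w [0..<i])"
  shows "follows sigma (map w [0..<n])"
  using assms unfolding follows_def by (simp add: take_map)

lemma follows_extends_to_play:
  fixes sigma :: "'a list \<Rightarrow> 'a set"
  assumes nonempty: "\<forall>u. sigma u \<noteq> {}" and "follows sigma u"
  shows "\<exists>w. (\<forall>i. w i \<in> sigma (map w [0..<i])) \<and> map w [0..<length u] = u"
proof -
  define next_letter where
    "next_letter m v = (if m < length u then u ! m else (SOME a. a \<in> sigma v))" for m v
  define prefix where "prefix = rec_nat [] (\<lambda>m v. v @ [next_letter m v])"
  have prefix_0: "prefix 0 = []" and prefix_Suc: "prefix (Suc m) = prefix m @ [next_letter m (prefix m)]"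
    for m unfolding prefix_def by simp_all
  have prefix_take: "m \<le> length u \<Longrightarrow> prefix m = take m u" for m
    by (induction m) (simp_all add: prefix_0 prefix_Suc next_letter_def take_Suc_conv_app_nth)
  define w where "w i = next_letter i (prefix i)" for i
  have map_w: "map w [0..<i] = prefix i" for i
    by (induction i) (simp_all add: prefix_0 prefix_Suc w_def)
  have "w i \<in> sigma (map w [0..<i])" for i
  proof (cases "i < length u")
    case True
    then show ?thesis
      using \<open>follows sigma u\<close> prefix_take[of i] by (simp add: map_w w_def next_letter_def follows_def)
  next
    case False
    then show ?thesis using nonempty by (simp add: map_w w_def next_letter_def some_in_eq)
  qed
  moreover have "map w [0..<length u] = u" using map_w prefix_take by simp
  ultimately show ?thesis by blast
qed

lemma finite_witness_for_all:
  fixes P :: "'v \<Rightarrow> nat \<Rightarrow> bool"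
  assumes "finite S" and "\<forall>m. \<exists>v\<in>S. P v m"
    and downclosed: "\<And>v m m'. m \<le> m' \<Longrightarrow> P v m' \<Longrightarrow> P v m"
  shows "\<exists>v\<in>S. \<forall>m. P v m"
proof (rule ccontr)
  assume "\<not> ?thesis"
  then obtain f where f: "\<forall>v\<in>S. \<not> P v (f v)" by metis
  obtain v where v: "v \<in> S" "P v (Max (f ` S))" using assms(2) by blast
  have "f v \<le> Max (f ` S)" using \<open>finite S\<close> v(1) by simp
  then show False using downclosed v f by blast
qed

definition reads_from :: "('v \<times> 'a \<times> 'v) set \<Rightarrow> (nat \<Rightarrow> 'a) \<Rightarrow> nat \<Rightarrow> 'v \<Rightarrow> nat \<Rightarrow> bool" where
  "reads_from E w i v m \<longleftrightarrow> (\<exists>p. p 0 = v \<and> (\<forall>j<m. (p j, w (i + j), p (Suc j)) \<in> E))"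

lemma reads_from_downclosed: "m \<le> m' \<Longrightarrow> reads_from E w i v m' \<Longrightarrow> reads_from E w i v m"
  unfolding reads_from_def by auto

lemma reads_from_step:
  assumes "finite E" and "\<forall>m. reads_from E w i v m"
  shows "\<exists>v'. (v, w i, v') \<in> E \<and> (\<forall>m. reads_from E w (Suc i) v' m)"
proof -
  define succs where "succs = {v'. (v, w i, v') \<in> E}"
  have "succs \<subseteq> (\<lambda>e. snd (snd e)) ` E" unfolding succs_def by force
  then have "finite succs" by (rule finite_subset) (simp add: \<open>finite E\<close>)
  moreover have "\<forall>m. \<exists>v'\<in>succs. reads_from E w (Suc i) v' m"
  proof
    fix m
    obtain p where p: "p 0 = v" "\<forall>j<Suc m. (p j, w (i + j), p (Suc j)) \<in> E"
      using assms(2) unfolding reads_from_def by blast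
    then have "p 1 \<in> succs" unfolding succs_def by force
    moreover have "reads_from E w (Suc i) (p 1) m"
      unfolding reads_from_def
    proof (intro exI[of _ "\<lambda>j. p (Suc j)"] conjI allI impI)
      fix j assume "j < m"
      then show "(p (Suc j), w (Suc i + j), p (Suc (Suc j))) \<in> E"
        using p(2)[rule_format, of "Suc j"] by simp
    qed simp
    ultimately show "\<exists>v'\<in>succs. reads_from E w (Suc i) v' m" by blast
  qed
  ultimately have "\<exists>v'\<in>succs. \<forall>m. reads_from E w (Suc i) v' m"
    by (rule finite_witness_for_all) (rule reads_from_downclosed)
  then show ?thesis unfolding succs_def by blast
qed

lemma koenig_path:
  fixes E :: "('v \<times> 'a \<times> 'v) set"
  assumes "finite E" and "finite S"
    and arbitrarily_long: "\<forall>m. \<exists>p. p 0 \<in> S \<and> (\<forall>j<m. (p j, w j, p (Suc j)) \<in> E)"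
  shows "\<exists>p. \<forall>i. (p i, w i, p (Suc i)) \<in> E"
proof -
  have "\<forall>m. \<exists>v\<in>S. reads_from E w 0 v m"
  proof
    fix m
    obtain p where "p 0 \<in> S" "\<forall>j<m. (p j, w j, p (Suc j)) \<in> E" using arbitrarily_long by blast
    then show "\<exists>v\<in>S. reads_from E w 0 v m" unfolding reads_from_def by auto
  qed
  with \<open>finite S\<close> have "\<exists>v\<in>S. \<forall>m. reads_from E w 0 v m"
    by (rule finite_witness_for_all) (rule reads_from_downclosed)
  then obtain v0 where v0: "\<forall>m. reads_from E w 0 v0 m" by blast
  have "\<forall>i v. \<exists>v'. (\<forall>m. reads_from E w i v m) \<longrightarrow>
      (v, w i, v') \<in> E \<and> (\<forall>m. reads_from E w (Suc i) v' m)"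
    using reads_from_step[OF \<open>finite E\<close>] by blast
  then obtain nxt where nxt: "\<And>i v. \<forall>m. reads_from E w i v m \<Longrightarrow>
      (v, w i, nxt i v) \<in> E \<and> (\<forall>m. reads_from E w (Suc i) (nxt i v) m)"
    by metis
  define p where "p = rec_nat v0 nxt"
  have p_Suc: "p (Suc i) = nxt i (p i)" for i unfolding p_def by simp
  have good: "\<forall>m. reads_from E w i (p i) m" for i
  proof (induction i)
    case 0
    then show ?case using v0 by (simp add: p_def)
  next
    case (Suc i)
    then show ?case using nxt[of i "p i"] by (simp add: p_Suc)
  qed
  have "(p i, w i, p (Suc i)) \<in> E" for i using nxt[OF good[of i]] by (simp add: p_Suc)
  then show ?thesis by blast
qed

definition post :: "('v \<times> 'a \<times> 'v) set \<Rightarrow> 'v set \<Rightarrow> 'a \<Rightarrow> 'v set" where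
  "post E S a = {v'. \<exists>v\<in>S. (v, a, v') \<in> E}"

lemma mem_foldl_post_iff:
  "v' \<in> foldl (post E) S u \<longleftrightarrow>
    (\<exists>p. p 0 \<in> S \<and> p (length u) = v' \<and> (\<forall>j<length u. (p j, u ! j, p (Suc j)) \<in> E))"
proof (induction u arbitrary: v' rule: rev_induct)
  case Nil
  show ?case
  proof
    assume "v' \<in> foldl (post E) S []"
    then show "\<exists>p. p 0 \<in> S \<and> p (length []) = v' \<and> (\<forall>j<length []. (p j, [] ! j, p (Suc j)) \<in> E)"
      by (intro exI[of _ "\<lambda>_. v'"]) simp
  qed auto
next
  case (snoc a u)
  show ?case
  proof
    assume "v' \<in> foldl (post E) S (u @ [a])"
    then obtain v where v: "v \<in> foldl (post E) S u" "(v, a, v') \<in> E" by (auto simp: post_def)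
    then obtain p where p: "p 0 \<in> S" "p (length u) = v" "\<forall>j<length u. (p j, u ! j, p (Suc j)) \<in> E"
      using snoc.IH[of v] by blast
    define p' where "p' = p(Suc (length u) := v')"
    show "\<exists>p. p 0 \<in> S \<and> p (length (u @ [a])) = v' \<and> (\<forall>j<length (u @ [a]). (p j, (u @ [a]) ! j, p (Suc j)) \<in> E)"
    proof (intro exI[of _ p'] conjI allI impI)
      show "p' 0 \<in> S" using p by (simp add: p'_def)
      show "p' (length (u @ [a])) = v'" by (simp add: p'_def)
      fix j assume "j < length (u @ [a])"
      then have "j < length u \<or> j = length u" by auto
      then show "(p' j, (u @ [a]) ! j, p' (Suc j)) \<in> E"
        using p v by (auto simp: p'_def nth_append)
    qed
  next
    assume "\<exists>p. p 0 \<in> S \<and> p (length (u @ [a])) = v' \<and> (\<forall>j<length (u @ [a]). (p j, (u @ [a]) ! j, p (Suc j)) \<in> E)"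
    then obtain p where p: "p 0 \<in> S" "p (Suc (length u)) = v'"
      "\<forall>j<Suc (length u). (p j, (u @ [a]) ! j, p (Suc j)) \<in> E" by auto
    have "\<forall>j<length u. (p j, u ! j, p (Suc j)) \<in> E"
    proof (intro allI impI)
      fix j assume "j < length u"
      then show "(p j, u ! j, p (Suc j)) \<in> E" using p(3)[rule_format, of j] by (simp add: nth_append)
    qed
    then have "p (length u) \<in> foldl (post E) S u" using snoc.IH[of "p (length u)"] p(1) by blast
    moreover have "(p (length u), a, v') \<in> E" using p(3)[rule_format, of "length u"] p(2) by simp
    ultimately show "v' \<in> foldl (post E) S (u @ [a])" by (auto simp: post_def)
  qed
qed

lemma foldl_post_subset: "E \<subseteq> V \<times> UNIV \<times> V \<Longrightarrow> foldl (post E) V u \<subseteq> V"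
  by (induction u rule: rev_induct) (auto simp: post_def)

text \<open>The sets \<open>S\<close> stand for the knowledge sets \<open>foldl (post E) V u\<close>: the vertices at which
  a path labelled by the word \<open>u\<close> played so far may end.\<close>
definition cpre_post :: "'v set \<Rightarrow> ('v \<times> 'a \<times> 'v) set \<Rightarrow> nat \<Rightarrow> 'v set set \<Rightarrow> 'v set set" where
  "cpre_post V E k Ws = {S. S \<subseteq> V \<and> S \<noteq> {} \<and> Suc k \<le> card {a. post E S a \<in> Ws}}"

definition winning_chain ::
    "'v set \<Rightarrow> ('v \<times> 'a \<times> 'v) set \<Rightarrow> (nat \<Rightarrow> nat) \<Rightarrow> (nat \<Rightarrow> 'v set set) \<Rightarrow> bool" where
  "winning_chain V E alpha Ws \<longleftrightarrow> (\<forall>i. Ws i \<noteq> {} \<and> Ws i \<subseteq> cpre_post V E (alpha i) (Ws (Suc i)))"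

lemma foldl_post_follows_nonempty:
  fixes sigma :: "'a list \<Rightarrow> 'a set"
  assumes "E \<subseteq> V \<times> UNIV \<times> V" and "\<forall>u. sigma u \<noteq> {}"
    and wins: "\<forall>w. (\<forall>i. w i \<in> sigma (map w [0..<i])) \<longrightarrow> (\<exists>p. \<forall>i. (p i, w i, p (Suc i)) \<in> E)"
    and "follows sigma u"
  shows "foldl (post E) V u \<noteq> {}"
proof -
  obtain w where w: "\<forall>i. w i \<in> sigma (map w [0..<i])" "map w [0..<length u] = u"
    using follows_extends_to_play[OF assms(2,4)] by blast
  obtain p where p: "\<forall>i. (p i, w i, p (Suc i)) \<in> E" using wins w(1) by blast
  have "p 0 \<in> V" using p[rule_format, of 0] assms(1) by blast
  moreover have "\<forall>j<length u. (p j, u ! j, p (Suc j)) \<in> E"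
  proof (intro allI impI)
    fix j assume "j < length u"
    then have "u ! j = w j" using w(2) by (metis add_0 diff_zero nth_map_upt)
    then show "(p j, u ! j, p (Suc j)) \<in> E" using p by simp
  qed
  ultimately have "p (length u) \<in> foldl (post E) V u"
    unfolding mem_foldl_post_iff by blast
  then show ?thesis by blast
qed

lemma W_inf_imp_winning_chain:
  fixes Y :: "(nat \<Rightarrow> ('a::finite)) set" and E :: "('v \<times> 'a \<times> 'v) set"
  assumes EV: "E \<subseteq> V \<times> UNIV \<times> V" and Y: "Y = {x. \<exists>p. \<forall>i. (p i, x i, p (Suc i)) \<in> E}"
    and "alpha \<in> W_inf Y"
  shows "\<exists>Ws. winning_chain V E alpha Ws"
proof -
  obtain sigma :: "'a list \<Rightarrow> 'a set" where
    card_sigma: "\<forall>u. card (sigma u) = alpha (length u) + 1" and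
    wins: "\<forall>w. (\<forall>i. w i \<in> sigma (map w [0..<i])) \<longrightarrow> w \<in> Y"
    using \<open>alpha \<in> W_inf Y\<close> unfolding W_inf_def by blast
  have nonempty: "\<forall>u. sigma u \<noteq> {}"
  proof
    fix u show "sigma u \<noteq> {}" using card_sigma[rule_format, of u] by auto
  qed
  have wins_E: "\<forall>w. (\<forall>i. w i \<in> sigma (map w [0..<i])) \<longrightarrow> (\<exists>p. \<forall>i. (p i, w i, p (Suc i)) \<in> E)"
  proof (intro allI impI)
    fix w assume "\<forall>i. w i \<in> sigma (map w [0..<i])"
    then have "w \<in> Y" using wins by blast
    then show "\<exists>p. \<forall>i. (p i, w i, p (Suc i)) \<in> E" unfolding Y by simp
  qed
  define Ws where "Ws i = {foldl (post E) V u | u. length u = i \<and> follows sigma u}" for i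
  have Ws_nonempty: "Ws i \<noteq> {}" for i
  proof -
    obtain w where "\<forall>i. w i \<in> sigma (map w [0..<i])"
      using follows_extends_to_play[OF nonempty, of "[]"] by (auto simp: follows_def)
    then have "follows sigma (map w [0..<i])" by (rule follows_prefix)
    then have "foldl (post E) V (map w [0..<i]) \<in> Ws i"
      unfolding Ws_def by (intro CollectI exI[of _ "map w [0..<i]"]) simp
    then show ?thesis by blast
  qed
  have chain_step: "S \<in> cpre_post V E (alpha i) (Ws (Suc i))" if "S \<in> Ws i" for S i
  proof -
    obtain u where u: "S = foldl (post E) V u" "length u = i" "follows sigma u"
      using \<open>S \<in> Ws i\<close> unfolding Ws_def by blast
    have "sigma u \<subseteq> {a. post E S a \<in> Ws (Suc i)}"
    proof
      fix a assume "a \<in> sigma u"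
      then have "follows sigma (u @ [a])" using u(3) by (simp add: follows_snoc)
      then have "foldl (post E) V (u @ [a]) \<in> Ws (Suc i)"
        unfolding Ws_def using u(2) by (intro CollectI exI[of _ "u @ [a]"]) simp
      then show "a \<in> {a. post E S a \<in> Ws (Suc i)}" using u(1) by simp
    qed
    then have "card (sigma u) \<le> card {a. post E S a \<in> Ws (Suc i)}" by (simp add: card_mono)
    then have "Suc (alpha i) \<le> card {a. post E S a \<in> Ws (Suc i)}"
      using card_sigma u(2) by simp
    moreover have "S \<noteq> {}"
      unfolding u(1) by (rule foldl_post_follows_nonempty[OF EV nonempty wins_E u(3)])
    moreover have "S \<subseteq> V" unfolding u(1) by (rule foldl_post_subset[OF EV])
    ultimately show ?thesis unfolding cpre_post_def by blast
  qed
  then have "winning_chain V E alpha Ws"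
    unfolding winning_chain_def using Ws_nonempty chain_step by (simp add: subset_iff)
  then show ?thesis by blast
qed

lemma winning_chain_imp_W_inf:
  fixes Y :: "(nat \<Rightarrow> ('a::finite)) set" and E :: "('v \<times> 'a \<times> 'v) set"
  assumes "finite E" "finite V" and Y: "Y = {x. \<exists>p. \<forall>i. (p i, x i, p (Suc i)) \<in> E}"
    and bound: "\<forall>j. alpha j < card (UNIV::'a set)" and chain: "winning_chain V E alpha Ws"
  shows "alpha \<in> W_inf Y"
proof -
  obtain S0 where S0: "S0 \<in> Ws 0" using chain unfolding winning_chain_def by blast
  then have "S0 \<subseteq> V" using chain unfolding winning_chain_def cpre_post_def by blast
  define st where "st u = foldl (post E) S0 u" for u
  have "\<exists>B :: 'a set. card B = alpha (length u) + 1 \<and>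
      (st u \<in> Ws (length u) \<longrightarrow> B \<subseteq> {a. post E (st u) a \<in> Ws (Suc (length u))})" for u
  proof (cases "st u \<in> Ws (length u)")
    case True
    then have "Suc (alpha (length u)) \<le> card {a. post E (st u) a \<in> Ws (Suc (length u))}"
      using chain unfolding winning_chain_def cpre_post_def by blast
    then show ?thesis by (metis Suc_eq_plus1 obtain_subset_with_card_n)
  next
    case False
    have "Suc (alpha (length u)) \<le> card (UNIV :: 'a set)" using bound by (simp add: Suc_leI)
    then show ?thesis using False by (metis Suc_eq_plus1 obtain_subset_with_card_n)
  qed
  then obtain sigma :: "'a list \<Rightarrow> 'a set" where
    sigma: "\<And>u. card (sigma u) = alpha (length u) + 1"
      "\<And>u. st u \<in> Ws (length u) \<Longrightarrow> sigma u \<subseteq> {a. post E (st u) a \<in> Ws (Suc (length u))}"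
    by metis
  have "w \<in> Y" if w: "\<forall>i. w i \<in> sigma (map w [0..<i])" for w
  proof -
    have in_chain: "st (map w [0..<i]) \<in> Ws i" for i
    proof (induction i)
      case 0
      then show ?case using S0 by (simp add: st_def)
    next
      case (Suc i)
      then have "post E (st (map w [0..<i])) (w i) \<in> Ws (Suc i)" using sigma(2) w by force
      then show ?case by (simp add: st_def)
    qed
    have "\<exists>p. p 0 \<in> S0 \<and> (\<forall>j<m. (p j, w j, p (Suc j)) \<in> E)" for m
    proof -
      have "st (map w [0..<m]) \<noteq> {}"
        using in_chain chain unfolding winning_chain_def cpre_post_def by blast
      then obtain v where "v \<in> foldl (post E) S0 (map w [0..<m])" unfolding st_def by blast
      then obtain p where "p 0 \<in> S0" "\<forall>j<m. (p j, map w [0..<m] ! j, p (Suc j)) \<in> E"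
        unfolding mem_foldl_post_iff by auto
      then show ?thesis by auto
    qed
    then show "w \<in> Y"
      using koenig_path[OF \<open>finite E\<close> finite_subset[OF \<open>S0 \<subseteq> V\<close> \<open>finite V\<close>]] Y by blast
  qed
  then show ?thesis unfolding W_inf_def using bound sigma(1) by blast
qed

lemma sofic_W_inf:
  fixes Y :: "(nat \<Rightarrow> ('a::finite)) set"
  assumes "sofic_over UNIV Y"
  shows "sofic_over {..<card (UNIV::'a set)} (W_inf Y)"
proof -
  obtain V and E :: "(nat \<times> 'a \<times> nat) set" where "finite V" "finite E"
    and EV: "E \<subseteq> V \<times> UNIV \<times> V" and Y: "Y = {x. \<exists>p. \<forall>i. (p i, x i, p (Suc i)) \<in> E}"
    using assms unfolding sofic_over_def by auto
  define n where "n = card (UNIV::'a set)"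
  have W_inf_iff: "alpha \<in> W_inf Y \<longleftrightarrow> (\<forall>j. alpha j < n) \<and> (\<exists>Ws. winning_chain V E alpha Ws)"
    for alpha
  proof
    assume "alpha \<in> W_inf Y"
    then show "(\<forall>j. alpha j < n) \<and> (\<exists>Ws. winning_chain V E alpha Ws)"
      using W_inf_imp_winning_chain[OF EV Y] unfolding W_inf_def n_def by blast
  next
    assume "(\<forall>j. alpha j < n) \<and> (\<exists>Ws. winning_chain V E alpha Ws)"
    then show "alpha \<in> W_inf Y"
      using winning_chain_imp_W_inf[OF \<open>finite E\<close> \<open>finite V\<close> Y] unfolding n_def by blast
  qed
  define E' where "E' = {(A, k, B). A \<in> Pow (Pow V) \<and> B \<in> Pow (Pow V) \<and> k < n \<and>
      A \<noteq> {} \<and> A \<subseteq> cpre_post V E k B}"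
  have E'_sub: "E' \<subseteq> Pow (Pow V) \<times> {..<n} \<times> Pow (Pow V)" unfolding E'_def by auto
  have "cpre_post V E k B \<subseteq> Pow V" for k B unfolding cpre_post_def by auto
  then have "(\<forall>i. (Ws i, alpha i, Ws (Suc i)) \<in> E') \<longleftrightarrow> (\<forall>j. alpha j < n) \<and> winning_chain V E alpha Ws"
    for Ws alpha unfolding E'_def winning_chain_def by blast
  then have "W_inf Y = {x. \<exists>p. \<forall>i. (p i, x i, p (Suc i)) \<in> E'}"
    using W_inf_iff by blast
  moreover have "finite E'" using E'_sub \<open>finite V\<close> by (simp add: finite_subset)
  ultimately show ?thesis
    using \<open>finite V\<close> E'_sub unfolding n_def by (intro sofic_overI) auto
qed

theorem mainTheorem11:
  fixes X :: "('a::finite) list set" and Y :: "(nat \<Rightarrow> 'a) set"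
  shows "(regular_over UNIV X \<longrightarrow> regular_over {..<card (UNIV::'a set)} (W_fin X)) \<and>
         (sofic_over UNIV Y \<longrightarrow> sofic_over {..<card (UNIV::'a set)} (W_inf Y))"
  using regular_W_fin[of X] sofic_W_inf[of Y] by blast

end
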